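(* Define $E_{0,n}(x)=1$ for all $n\ge0$, $E_{1,n}(x)=1+x$ for all $n\ge1$, and for $2\le k\le n$, $E_{k,n}(x)=\widetilde{E}^{\mathbf{s}}_{k-1}(x)$ with $\mathbf{s}=(n-k+2,\dots,n)$. Then for all $1\le k\le n$, \[E_{k,n}(x)=E_{k-1,n-1}(x)+x\sum_{j=0}^{k-1}\binom{n-1}{j}A_j(x)\,E_{k-1-j,n-1-j}(x).\]
   Context: For $\mathbf{s}=(s_1,\dots,s_m)\in\mathbb{Z}_{>0}^m$ let $\mathcal{I}^{\mathbf{s}}_m=\{\mathbf{e}\in\mathbb{Z}^m:0\le e_i<s_i\}$, with $e_0=e_{m+1}=0$, $s_0=s_{m+1}=1$; $i\in\{0,\dots,m\}$ is an ascent if $e_i/s_i<e_{i+1}/s_{i+1}$ and a collision if $e_i/s_i=e_{i+1}/s_{i+1}$; $\widetilde{E}^{\mathbf{s}}_m(x)=\sum_{\mathbf{e}\in\mathcal{I}^{\mathbf{s}}_m}(1+x)^{\mathrm{col}(\mathbf{e})}x^{\mathrm{asc}(\mathbf{e})}$. Eulerian polynomials: $A_0(x)=1$, $A_n(x)=\sum_{\sigma\in\mathfrak{S}_n}x^{\mathrm{des}(\sigma)}$ for $n\ge1$, $\mathrm{des}(\sigma)=|\{i\in[n-1]:\sigma_i>\sigma_{i+1}\}|$. *)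

theory Defs
  imports "HOL-Computational_Algebra.Polynomial" "HOL-Combinatorics.Permutations"
begin

definition inv_seqs :: "nat list \<Rightarrow> nat list set" where
  "inv_seqs s = {e. length e = length s \<and> (\<forall>i<length s. e ! i < s ! i)}"

text \<open>Padded versions: e_0 = e_{m+1} = 0 and s_0 = s_{m+1} = 1; position i of the padded
  list is index i (0..m+1).\<close>
definition pad_e :: "nat list \<Rightarrow> nat list" where
  "pad_e e = [0] @ e @ [0]"

definition pad_s :: "nat list \<Rightarrow> nat list" where
  "pad_s s = [1] @ s @ [1]"

definition ratio :: "nat list \<Rightarrow> nat list \<Rightarrow> nat \<Rightarrow> rat" where
  "ratio s e i = of_nat (pad_e e ! i) / of_nat (pad_s s ! i)"

definition asc :: "nat list \<Rightarrow> nat list \<Rightarrow> nat" where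
  "asc s e = card {i. i \<le> length s \<and> ratio s e i < ratio s e (Suc i)}"

definition col :: "nat list \<Rightarrow> nat list \<Rightarrow> nat" where
  "col s e = card {i. i \<le> length s \<and> ratio s e i = ratio s e (Suc i)}"

definition Etilde :: "nat list \<Rightarrow> int poly" where
  "Etilde s = (\<Sum>e\<in>inv_seqs s. [:1, 1:] ^ col s e * [:0, 1:] ^ asc s e)"

definition des :: "nat \<Rightarrow> (nat \<Rightarrow> nat) \<Rightarrow> nat" where
  "des n \<sigma> = card {i \<in> {1..<n}. \<sigma> i > \<sigma> (Suc i)}"

definition eulerian :: "nat \<Rightarrow> int poly" where
  "eulerian n = (if n = 0 then 1 else
     (\<Sum>\<sigma>\<in>{\<sigma>. \<sigma> permutes {1..n}}. [:0, 1:] ^ des n \<sigma>))"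

text \<open>E_{k,n}; meaningful for k \<le> n (and n \<ge> 1 when k = 1). For k \<ge> 2,
  s = (n-k+2, ..., n) is the list [n-k+2 ..< n+1] of length k-1.\<close>
definition Ekn :: "nat \<Rightarrow> nat \<Rightarrow> int poly" where
  "Ekn k n = (if k = 0 then 1 else if k = 1 then [:1, 1:]
              else Etilde [n - k + 2 ..< n + 1])"

end

theory Submission
  imports Defs "HOL-Library.Infinite_Set"
begin

text \<open>For \<open>s = (c+1, \<dots>, c+m)\<close> two consecutive ratios \<open>e\<^sub>i/s\<^sub>i\<close> compare like the entries
  \<open>e\<^sub>i\<close> themselves and collide only when both entries vanish, so \<open>E\<^sub>k\<^sub>,\<^sub>n\<close> is a sum of
  products of local weights along \<open>0, e\<^sub>1, \<dots>, e\<^sub>m, 0\<close>. Cutting \<open>e\<close> after its last zero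
  splits it into a shorter sequence ending in zero and a zero-free tail, and the weight
  factorizes accordingly; this yields a convolution recursion. The zero-free tails of length
  \<open>j\<close> counted by ascents have generating polynomial \<open>binomial (c + j - 1) j \<cdot> A\<^sub>j(x)\<close>:
  reflecting the last letter identifies their recursion in the last letter with that of
  injective words of length \<open>j\<close> over \<open>{1..c+j-1}\<close> counted by descents, and standardizing an
  injective word yields a permutation with the same descents.\<close>

text \<open>The weight of an adjacent pair in \<open>0, e\<^sub>1, \<dots>, e\<^sub>m, 0\<close>: \<open>x\<close> for an ascent, \<open>1 + x\<close> for a
  collision (necessarily of two zeros, see \<open>ratio_eq_consecutive_iff\<close>), \<open>1\<close> otherwise.\<close>

definition pair_weight :: "nat \<Rightarrow> nat \<Rightarrow> int poly" where
  "pair_weight a b = (if a < b then [:0, 1:] else if a = 0 \<and> b = 0 then [:1, 1:] else 1)"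

fun list_weight :: "nat list \<Rightarrow> int poly" where
  "list_weight [] = 1"
| "list_weight [a] = 1"
| "list_weight (a # b # r) = pair_weight a b * list_weight (b # r)"

lemma list_weight_append: "list_weight (xs @ y # ys) = list_weight (xs @ [y]) * list_weight (y # ys)"
proof (induction xs)
  case (Cons a xs)
  then show ?case by (cases xs) auto
qed simp

lemma list_weight_snoc:
  assumes "xs \<noteq> []"
  shows "list_weight (xs @ [z]) = list_weight xs * pair_weight (last xs) z"
proof -
  have "xs = butlast xs @ [last xs]" using assms by simp
  then show ?thesis
    using list_weight_append[of "butlast xs" "last xs" "[z]"] by (metis append.assoc append_Cons
        append_Nil list_weight.simps(2,3) mult.right_neutral)
qed

lemma list_weight_conv_prod: "list_weight p = (\<Prod>i<length p - 1. pair_weight (p ! i) (p ! Suc i))"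
proof (induction p rule: list_weight.induct)
  case (3 a b r)
  have "(\<Prod>i<length (a # b # r) - 1. pair_weight ((a # b # r) ! i) ((a # b # r) ! Suc i))
      = pair_weight a b * (\<Prod>i<length r. pair_weight ((b # r) ! i) ((b # r) ! Suc i))"
    by (simp add: prod.lessThan_Suc_shift del: prod.lessThan_Suc)
  then show ?case using 3 by simp
qed auto

lemma prod_pair_weight:
  fixes p :: "nat \<Rightarrow> nat"
  assumes "finite I"
  shows "(\<Prod>i\<in>I. pair_weight (p i) (p (Suc i)))
    = [:1, 1:] ^ card {i\<in>I. p i = 0 \<and> p (Suc i) = 0} * [:0, 1:] ^ card {i\<in>I. p i < p (Suc i)}"
proof -
  let ?A = "{i\<in>I. p i < p (Suc i)}" and ?Z = "{i\<in>I. p i = 0 \<and> p (Suc i) = 0}"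
  have "(\<Prod>i\<in>I. pair_weight (p i) (p (Suc i)))
      = (\<Prod>i\<in>I \<inter> {i. p i < p (Suc i)}. [:0, 1:]) *
        (\<Prod>i\<in>I \<inter> - {i. p i < p (Suc i)}. if p i = 0 \<and> p (Suc i) = 0 then [:1, 1:] else 1)"
    unfolding pair_weight_def by (rule prod.If_cases[OF assms])
  also have "(\<Prod>i\<in>I \<inter> - {i. p i < p (Suc i)}. if p i = 0 \<and> p (Suc i) = 0 then [:1, 1:] else 1)
      = (\<Prod>i\<in>I \<inter> - {i. p i < p (Suc i)} \<inter> {i. p i = 0 \<and> p (Suc i) = 0}. [:1, 1:] :: int poly)"
    using assms by (simp add: prod.If_cases)
  also have "I \<inter> - {i. p i < p (Suc i)} \<inter> {i. p i = 0 \<and> p (Suc i) = 0} = ?Z" by auto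
  also have "I \<inter> {i. p i < p (Suc i)} = ?A" by auto
  finally show ?thesis by (simp add: mult.commute)
qed

lemma cross_mult_Suc_less_iff:
  fixes a b s :: nat
  assumes "a < s"
  shows "a * Suc s < b * s \<longleftrightarrow> a < b"
proof
  assume "a < b"
  then have "Suc a * s \<le> b * s" by (intro mult_le_mono1) simp
  then show "a * Suc s < b * s" using assms by simp
next
  assume "a * Suc s < b * s"
  moreover have "b * s \<le> a * Suc s" if "b \<le> a"
    using that by (simp add: mult_le_mono1 trans_le_add2)
  ultimately show "a < b" by (meson not_le)
qed

lemma cross_mult_Suc_eq_iff:
  fixes a b s :: nat
  assumes "a < s"
  shows "a * Suc s = b * s \<longleftrightarrow> a = 0 \<and> b = 0"
proof
  assume eq: "a * Suc s = b * s"
  have "\<not> a < b" using cross_mult_Suc_less_iff[OF assms, of b] eq by simp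
  moreover have "\<not> b < a"
  proof
    assume "b < a"
    then have "b * s < a * s" using assms by simp
    then show False using eq by (metis le_add2 mult_Suc_right not_le)
  qed
  ultimately show "a = 0 \<and> b = 0" using eq by simp
qed simp

text \<open>Hypothesis \<open>adjacent\<close> holds for consecutive ratios of a padded sequence with
  \<open>s = (c+1, \<dots>, c+m)\<close>: either one side is the padding \<open>0/1\<close> or the denominators differ by one.\<close>

lemma
  fixes a b sa sb :: nat
  assumes "0 < sa" "0 < sb" "a < sa"
    and adjacent: "(a = 0 \<and> sa = 1) \<or> (b = 0 \<and> sb = 1) \<or> sb = Suc sa"
  shows frac_less_frac_iff: "(of_nat a / of_nat sa < (of_nat b / of_nat sb :: rat)) \<longleftrightarrow> a < b"
    and frac_eq_frac_iff: "(of_nat a / of_nat sa = (of_nat b / of_nat sb :: rat)) \<longleftrightarrow> a = 0 \<and> b = 0"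
proof -
  have "(of_nat a / of_nat sa < (of_nat b / of_nat sb :: rat)) \<longleftrightarrow> a * sb < b * sa"
    using assms(1,2) by (simp add: divide_simps flip: of_nat_mult)
  then show "(of_nat a / of_nat sa < (of_nat b / of_nat sb :: rat)) \<longleftrightarrow> a < b"
    using adjacent cross_mult_Suc_less_iff[OF assms(3), of b] assms(1,2) by auto
  have "(of_nat a / of_nat sa = (of_nat b / of_nat sb :: rat)) \<longleftrightarrow> a * sb = b * sa"
    using assms(1,2) by (simp add: divide_simps flip: of_nat_mult)
  then show "(of_nat a / of_nat sa = (of_nat b / of_nat sb :: rat)) \<longleftrightarrow> a = 0 \<and> b = 0"
    using adjacent cross_mult_Suc_eq_iff[OF assms(3), of b] assms(1,2) by auto
qed

definition bounded_seqs :: "nat \<Rightarrow> nat \<Rightarrow> nat list set" where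
  "bounded_seqs c m = {e. length e = m \<and> (\<forall>i<m. e ! i < c + 1 + i)}"

lemma inv_seqs_consecutive: "inv_seqs [c + 1..<c + m + 1] = bounded_seqs c m"
  unfolding inv_seqs_def bounded_seqs_def by (auto simp del: upt_Suc)

lemma pad_s_consecutive_nth:
  assumes "i \<le> Suc m"
  shows "pad_s [c + 1..<c + m + 1] ! i = (if i = 0 \<or> i = Suc m then 1 else c + i)"
  using assms unfolding pad_s_def by (auto simp: nth_append nth_Cons')

lemma pad_e_nth:
  assumes "length e = m" "i \<le> Suc m"
  shows "pad_e e ! i = (if i = 0 \<or> i = Suc m then 0 else e ! (i - 1))"
  using assms unfolding pad_e_def by (auto simp: nth_append nth_Cons')

lemma
  assumes e: "e \<in> bounded_seqs c m" and i: "i \<le> m"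
  shows ratio_less_consecutive_iff:
      "ratio [c + 1..<c + m + 1] e i < ratio [c + 1..<c + m + 1] e (Suc i)
         \<longleftrightarrow> pad_e e ! i < pad_e e ! Suc i"
    and ratio_eq_consecutive_iff:
      "ratio [c + 1..<c + m + 1] e i = ratio [c + 1..<c + m + 1] e (Suc i)
         \<longleftrightarrow> pad_e e ! i = 0 \<and> pad_e e ! Suc i = 0"
proof -
  let ?s = "[c + 1..<c + m + 1]"
  have len: "length e = m" and bd: "\<And>i. i < m \<Longrightarrow> e ! i < c + 1 + i"
    using e by (auto simp: bounded_seqs_def)
  define a b sa sb where "a = pad_e e ! i" and "b = pad_e e ! Suc i"
    and "sa = pad_s ?s ! i" and "sb = pad_s ?s ! Suc i"
  have sa: "sa = (if i = 0 then 1 else c + i)" and sb: "sb = (if i = m then 1 else c + Suc i)"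
    unfolding sa_def sb_def using i by (subst pad_s_consecutive_nth; simp)+
  have a: "a = (if i = 0 then 0 else e ! (i - 1))" and b: "b = (if i = m then 0 else e ! i)"
    unfolding a_def b_def using i len by (simp_all add: pad_e_nth)
  have "a < sa" using bd[of "i - 1"] i by (auto simp: a sa)
  moreover have "(a = 0 \<and> sa = 1) \<or> (b = 0 \<and> sb = 1) \<or> sb = Suc sa" by (auto simp: a b sa sb)
  moreover have "0 < sa" "0 < sb" by (auto simp: sa sb)
  moreover have "ratio ?s e i = of_nat a / of_nat sa" "ratio ?s e (Suc i) = of_nat b / of_nat sb"
    unfolding ratio_def a_def b_def sa_def sb_def by auto
  ultimately show "ratio ?s e i < ratio ?s e (Suc i) \<longleftrightarrow> pad_e e ! i < pad_e e ! Suc i"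
    and "ratio ?s e i = ratio ?s e (Suc i) \<longleftrightarrow> pad_e e ! i = 0 \<and> pad_e e ! Suc i = 0"
    using frac_less_frac_iff frac_eq_frac_iff by (simp_all add: a_def b_def)
qed

lemma Etilde_summand_consecutive:
  assumes e: "e \<in> bounded_seqs c m"
  shows "[:1, 1:] ^ col [c + 1..<c + m + 1] e * [:0, 1:] ^ asc [c + 1..<c + m + 1] e
    = list_weight (0 # e @ [0])"
proof -
  let ?s = "[c + 1..<c + m + 1]" and ?p = "pad_e e"
  have len: "length e = m" using e by (simp add: bounded_seqs_def)
  have "col ?s e = card {i\<in>{..m}. ?p ! i = 0 \<and> ?p ! Suc i = 0}"
    unfolding col_def using ratio_eq_consecutive_iff[OF e] by (intro arg_cong[where f=card]) auto
  moreover have "asc ?s e = card {i\<in>{..m}. ?p ! i < ?p ! Suc i}"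
    unfolding asc_def using ratio_less_consecutive_iff[OF e] by (intro arg_cong[where f=card]) auto
  moreover have "list_weight (0 # e @ [0]) = (\<Prod>i\<in>{..m}. pair_weight (?p ! i) (?p ! Suc i))"
    using len by (simp add: list_weight_conv_prod pad_e_def lessThan_Suc_atMost)
  ultimately show ?thesis by (simp add: prod_pair_weight)
qed

lemma Etilde_consecutive:
  "Etilde [c + 1..<c + m + 1] = (\<Sum>e\<in>bounded_seqs c m. list_weight (0 # e @ [0]))"
  unfolding Etilde_def inv_seqs_consecutive by (rule sum.cong[OF refl]) (rule Etilde_summand_consecutive)

definition zero_ended_seqs :: "nat \<Rightarrow> nat \<Rightarrow> nat list set" where
  "zero_ended_seqs c q = {e \<in> bounded_seqs c q. last (0 # e) = 0}"

definition positive_seqs :: "nat \<Rightarrow> nat \<Rightarrow> nat list set" where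
  "positive_seqs c j = {a \<in> bounded_seqs c j. 0 \<notin> set a}"

definition zero_ended_poly :: "nat \<Rightarrow> nat \<Rightarrow> int poly" where
  "zero_ended_poly c q = (\<Sum>e\<in>zero_ended_seqs c q. list_weight (0 # e))"

definition positive_poly :: "nat \<Rightarrow> nat \<Rightarrow> int poly" where
  "positive_poly c j = (\<Sum>a\<in>positive_seqs c j. list_weight a)"

lemma finite_bounded_seqs: "finite (bounded_seqs c m)"
proof (rule finite_subset)
  show "bounded_seqs c m \<subseteq> {xs. set xs \<subseteq> {..<c + 1 + m} \<and> length xs = m}"
    unfolding bounded_seqs_def by (force simp: in_set_conv_nth)
qed (simp add: finite_lists_length_eq)

lemma finite_zero_ended_seqs: "finite (zero_ended_seqs c q)"
  using finite_bounded_seqs unfolding zero_ended_seqs_def by simp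

lemma finite_positive_seqs: "finite (positive_seqs c j)"
  using finite_bounded_seqs unfolding positive_seqs_def by simp

lemma positive_seqs_iff:
  "a \<in> positive_seqs c j \<longleftrightarrow> length a = j \<and> (\<forall>i<j. 0 < a ! i \<and> a ! i < c + 1 + i)"
  unfolding positive_seqs_def bounded_seqs_def by (auto simp: in_set_conv_nth)

lemma positive_seqs_0: "positive_seqs c 0 = {[]}"
  by (auto simp: positive_seqs_iff)

lemma append_in_bounded_seqs_iff:
  "p @ s \<in> bounded_seqs c (length p + j)
     \<longleftrightarrow> p \<in> bounded_seqs c (length p) \<and> s \<in> bounded_seqs (c + length p) j"
proof -
  have "(\<forall>i<length p + j. (p @ s) ! i < c + 1 + i)
      \<longleftrightarrow> (\<forall>i<length p. p ! i < c + 1 + i) \<and> (\<forall>i<j. s ! i < c + length p + 1 + i)"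
    by (auto simp: nth_append dest: spec[of _ "length p + _"])
      (metis add.assoc add.commute add_diff_inverse_nat add_less_cancel_left)
  then show ?thesis unfolding bounded_seqs_def by auto
qed

lemma zero_ended_poly_0: "zero_ended_poly c 0 = 1"
proof -
  have "zero_ended_seqs c 0 = {[]}" unfolding zero_ended_seqs_def bounded_seqs_def by auto
  then show ?thesis unfolding zero_ended_poly_def by simp
qed

lemma zero_ended_poly_Suc:
  "zero_ended_poly c (Suc m) = (\<Sum>e\<in>bounded_seqs c m. list_weight (0 # e @ [0]))"
proof -
  have "zero_ended_seqs c (Suc m) = (\<lambda>e. e @ [0]) ` bounded_seqs c m"
  proof (intro set_eqI iffI)
    fix e assume e: "e \<in> zero_ended_seqs c (Suc m)"
    then have len: "length (butlast e) = m" and "e \<noteq> []" "last e = 0"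
      by (auto simp: zero_ended_seqs_def bounded_seqs_def split: if_splits)
    then have eq: "e = butlast e @ [0]" by (metis append_butlast_last_id)
    then have "butlast e @ [0] \<in> bounded_seqs c (length (butlast e) + 1)"
      using e len by (simp add: zero_ended_seqs_def)
    then have "butlast e \<in> bounded_seqs c m"
      by (metis append_in_bounded_seqs_iff len)
    then show "e \<in> (\<lambda>e. e @ [0]) ` bounded_seqs c m" using eq by blast
  qed (auto simp: zero_ended_seqs_def bounded_seqs_def nth_append)
  moreover have "inj_on (\<lambda>e. e @ [0::nat]) (bounded_seqs c m)" by (auto simp: inj_on_def)
  ultimately show ?thesis unfolding zero_ended_poly_def by (simp add: sum.reindex)
qed

lemma zero_ended_prefix_eq:
  assumes "last (0 # p) = 0" and "0 \<notin> set s"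
  shows "rev (dropWhile (\<lambda>x. x \<noteq> 0) (rev (p @ s))) = p"
proof (cases p rule: rev_cases)
  case (snoc ys y)
  then show ?thesis using assms by (auto simp: dropWhile_append)
qed (use assms in \<open>auto simp: dropWhile_append\<close>)

lemma bounded_seqs_split_last_zero:
  "bounded_seqs c m
     = (\<Union>q\<le>m. (\<lambda>(p, s). p @ s) ` (zero_ended_seqs c q \<times> positive_seqs (c + q) (m - q)))"
  (is "_ = ?R")
proof (intro equalityI subsetI)
  fix e assume e: "e \<in> bounded_seqs c m"
  define p where "p = rev (dropWhile (\<lambda>x. x \<noteq> 0) (rev e))"
  define s where "s = rev (takeWhile (\<lambda>x. x \<noteq> 0) (rev e))"
  have eq: "e = p @ s" unfolding p_def s_def by (metis rev_append rev_rev_ident takeWhile_dropWhile_id)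
  have q: "length p \<le> m" and m: "m = length p + (m - length p)"
    using e eq by (auto simp: bounded_seqs_def)
  have "p \<in> bounded_seqs c (length p)" "s \<in> bounded_seqs (c + length p) (m - length p)"
    using e eq m append_in_bounded_seqs_iff[of p s c "m - length p"] by auto
  moreover have "last (0 # p) = 0"
    unfolding p_def using hd_dropWhile[of "\<lambda>x. x \<noteq> 0" "rev e"] by (simp add: last_rev)
  moreover have "0 \<notin> set s" unfolding s_def by (auto dest: set_takeWhileD)
  ultimately have "e \<in> (\<lambda>(p, s). p @ s)
      ` (zero_ended_seqs c (length p) \<times> positive_seqs (c + length p) (m - length p))"
    using eq by (auto simp: zero_ended_seqs_def positive_seqs_def)
  then show "e \<in> ?R" using q by blast
next
  fix e assume "e \<in> ?R"
  then obtain q p s where "q \<le> m" "p \<in> zero_ended_seqs c q" "s \<in> positive_seqs (c + q) (m - q)"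
    and "e = p @ s" by auto
  then show "e \<in> bounded_seqs c m"
    using append_in_bounded_seqs_iff[of p s c "m - q"]
    by (auto simp: zero_ended_seqs_def positive_seqs_def bounded_seqs_def)
qed

lemma list_weight_split_at_zero:
  assumes "last (0 # p) = 0"
  shows "list_weight (0 # p @ s @ [0]) = list_weight (0 # p) * list_weight (0 # s @ [0])"
proof -
  have p: "0 # p = butlast (0 # p) @ [0]" using assms by (metis append_butlast_last_id list.distinct(1))
  then have "0 # p @ s @ [0] = butlast (0 # p) @ 0 # s @ [0]" by (metis append.assoc append_Cons append_Nil)
  then show ?thesis using list_weight_append p by metis
qed

lemma list_weight_zero_free:
  assumes "0 \<notin> set s"
  shows "list_weight (0 # s @ [0]) = (if s = [] then [:1, 1:] else [:0, 1:] * list_weight s)"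
proof (cases s)
  case (Cons a s')
  then have "0 < a" "0 < last s" using assms last_in_set[of s] by (auto intro: gr0I)
  moreover have "list_weight (s @ [0]) = list_weight s * pair_weight (last s) 0"
    by (rule list_weight_snoc) (simp add: Cons)
  ultimately show ?thesis using Cons by (simp add: pair_weight_def)
qed (simp add: pair_weight_def)

lemma sum_bounded_seqs_split_last_zero:
  "(\<Sum>e\<in>bounded_seqs c m. list_weight (0 # e @ [0]))
     = (\<Sum>q\<le>m. zero_ended_poly c q * (\<Sum>s\<in>positive_seqs (c + q) (m - q). list_weight (0 # s @ [0])))"
proof -
  let ?Q = "\<lambda>q. zero_ended_seqs c q \<times> positive_seqs (c + q) (m - q)"
  have prefix: "p = rev (dropWhile (\<lambda>x. x \<noteq> 0) (rev (p @ s)))"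
    if "(p, s) \<in> ?Q q" for p s q
  proof (rule zero_ended_prefix_eq[symmetric])
    show "last (0 # p) = 0" "0 \<notin> set s"
      using that by (auto simp: zero_ended_seqs_def positive_seqs_def)
  qed
  have same_prefix: "p = p'" if "(p, s) \<in> ?Q q" "(p', s') \<in> ?Q q'" "p @ s = p' @ s'"
    for p s q p' s' q'
    using prefix[OF that(1)] prefix[OF that(2)] that(3) by simp
  have inj: "inj_on (\<lambda>(p, s). p @ s) (?Q q)" for q
    by (rule inj_onI) (use same_prefix in fastforce)
  have disjoint: "(\<lambda>(p, s). p @ s) ` ?Q q \<inter> (\<lambda>(p, s). p @ s) ` ?Q q' = {}" if "q \<noteq> q'" for q q'
  proof -
    have len: "length p = q" if "(p, s) \<in> ?Q q" for p s q
      using that by (simp add: zero_ended_seqs_def bounded_seqs_def)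
    have False if "(p, s) \<in> ?Q q" "(p', s') \<in> ?Q q'" "p @ s = p' @ s'" for p s p' s'
      using same_prefix[OF that] len[OF that(1)] len[OF that(2)] \<open>q \<noteq> q'\<close> by simp
    then show ?thesis by fastforce
  qed
  have "(\<Sum>e\<in>bounded_seqs c m. list_weight (0 # e @ [0]))
      = (\<Sum>q\<le>m. \<Sum>e\<in>(\<lambda>(p, s). p @ s) ` ?Q q. list_weight (0 # e @ [0]))"
    unfolding bounded_seqs_split_last_zero
    by (rule sum.UNION_disjoint) (auto simp: finite_zero_ended_seqs finite_positive_seqs disjoint)
  also have "\<dots> = (\<Sum>q\<le>m. \<Sum>(p, s)\<in>?Q q. list_weight (0 # p) * list_weight (0 # s @ [0]))"
  proof (rule sum.cong[OF refl])
    fix q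
    have "(\<Sum>e\<in>(\<lambda>(p, s). p @ s) ` ?Q q. list_weight (0 # e @ [0]))
        = (\<Sum>(p, s)\<in>?Q q. list_weight (0 # p @ s @ [0]))"
      by (subst sum.reindex[OF inj]) (simp add: case_prod_unfold)
    also have "\<dots> = (\<Sum>(p, s)\<in>?Q q. list_weight (0 # p) * list_weight (0 # s @ [0]))"
      by (rule sum.cong[OF refl]) (auto simp: zero_ended_seqs_def list_weight_split_at_zero)
    finally show "(\<Sum>e\<in>(\<lambda>(p, s). p @ s) ` ?Q q. list_weight (0 # e @ [0]))
        = (\<Sum>(p, s)\<in>?Q q. list_weight (0 # p) * list_weight (0 # s @ [0]))" .
  qed
  also have "\<dots> = (\<Sum>q\<le>m. zero_ended_poly c q
      * (\<Sum>s\<in>positive_seqs (c + q) (m - q). list_weight (0 # s @ [0])))"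
    by (simp add: zero_ended_poly_def sum_product sum.cartesian_product)
  finally show ?thesis .
qed

lemma zero_ended_poly_rec:
  "zero_ended_poly c (Suc m)
     = zero_ended_poly c m + [:0, 1:] * (\<Sum>q\<le>m. zero_ended_poly c q * positive_poly (c + q) (m - q))"
proof -
  let ?Z = "zero_ended_poly c" and ?P = "\<lambda>q. positive_poly (c + q) (m - q)"
  have closed: "(\<Sum>s\<in>positive_seqs (c + q) (m - q). list_weight (0 # s @ [0]))
      = [:0, 1:] * ?P q" if "q < m" for q
  proof -
    have "list_weight (0 # s @ [0]) = [:0, 1:] * list_weight s" if "s \<in> positive_seqs (c + q) (m - q)" for s
      using that \<open>q < m\<close> by (auto simp: positive_seqs_def bounded_seqs_def list_weight_zero_free)
    then show ?thesis by (simp add: positive_poly_def sum_distrib_left)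
  qed
  have last: "(\<Sum>s\<in>positive_seqs (c + m) 0. list_weight (0 # s @ [0])) = 1 + [:0, 1:]"
    by (simp add: positive_seqs_0 pair_weight_def one_pCons)
  have "?Z (Suc m) = (\<Sum>q<m. ?Z q * ([:0, 1:] * ?P q)) + ?Z m * (1 + [:0, 1:])"
    by (simp add: zero_ended_poly_Suc sum_bounded_seqs_split_last_zero closed last
        flip: lessThan_Suc_atMost)
  also have "\<dots> = ?Z m + [:0, 1:] * ((\<Sum>q<m. ?Z q * ?P q) + ?Z m * ?P m)"
    by (simp add: positive_poly_def positive_seqs_0 sum_distrib_left mult.left_commute
        distrib_left distrib_right)
  finally show ?thesis by (simp add: lessThan_Suc_atMost[symmetric])
qed

definition positive_last_poly :: "nat \<Rightarrow> nat \<Rightarrow> (nat \<Rightarrow> int poly) \<Rightarrow> int poly" where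
  "positive_last_poly c j \<phi> = (\<Sum>a\<in>positive_seqs c j. list_weight a * \<phi> (last a))"

lemma positive_seqs_Suc:
  "positive_seqs c (Suc j) = (\<lambda>(a, z). a @ [z]) ` (positive_seqs c j \<times> {1..c + j})"
proof -
  have snoc_iff: "a @ [z] \<in> positive_seqs c (Suc j) \<longleftrightarrow> a \<in> positive_seqs c j \<and> z \<in> {1..c + j}"
    if "length a = j" for a z
    using append_in_bounded_seqs_iff[of a "[z]" c 1] that
    by (auto simp: positive_seqs_def bounded_seqs_def)
  show ?thesis
  proof (intro set_eqI iffI)
    fix e assume e: "e \<in> positive_seqs c (Suc j)"
    then have len: "length e = Suc j" by (simp add: positive_seqs_def bounded_seqs_def)
    then have "e = butlast e @ [last e]" by (metis append_butlast_last_id list.size(3) nat.distinct(1))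
    moreover have "length (butlast e) = j" using len by simp
    ultimately show "e \<in> (\<lambda>(a, z). a @ [z]) ` (positive_seqs c j \<times> {1..c + j})"
      using e snoc_iff by (metis (no_types, lifting) SigmaI case_prod_conv image_eqI)
  next
    fix e assume "e \<in> (\<lambda>(a, z). a @ [z]) ` (positive_seqs c j \<times> {1..c + j})"
    then obtain a z where "a \<in> positive_seqs c j" "z \<in> {1..c + j}" "e = a @ [z]" by auto
    moreover from this have "length a = j" by (simp add: positive_seqs_iff)
    ultimately show "e \<in> positive_seqs c (Suc j)" using snoc_iff by simp
  qed
qed

lemma positive_last_poly_Suc:
  assumes "1 \<le> j"
  shows "positive_last_poly c (Suc j) \<phi>
    = positive_last_poly c j (\<lambda>v. \<Sum>z\<in>{1..c + j}. (if v < z then [:0, 1:] else 1) * \<phi> z)"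
proof -
  have inj: "inj_on (\<lambda>(a, z). a @ [z::nat]) (positive_seqs c j \<times> {1..c + j})"
    by (auto simp: inj_on_def)
  have "positive_last_poly c (Suc j) \<phi>
      = (\<Sum>(a, z)\<in>positive_seqs c j \<times> {1..c + j}. list_weight (a @ [z]) * \<phi> z)"
    unfolding positive_last_poly_def positive_seqs_Suc
    by (subst sum.reindex[OF inj]) (simp add: comp_def case_prod_unfold)
  also have "\<dots> = (\<Sum>a\<in>positive_seqs c j. \<Sum>z\<in>{1..c + j}. list_weight (a @ [z]) * \<phi> z)"
    by (simp add: sum.cartesian_product)
  also have "\<dots> = (\<Sum>a\<in>positive_seqs c j.
      list_weight a * (\<Sum>z\<in>{1..c + j}. (if last a < z then [:0, 1:] else 1) * \<phi> z))"
  proof (rule sum.cong[OF refl])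
    fix a assume "a \<in> positive_seqs c j"
    then have "a \<noteq> []" using assms by (auto simp: positive_seqs_iff)
    then show "(\<Sum>z\<in>{1..c + j}. list_weight (a @ [z]) * \<phi> z)
        = list_weight a * (\<Sum>z\<in>{1..c + j}. (if last a < z then [:0, 1:] else 1) * \<phi> z)"
      unfolding sum_distrib_left
      by (intro sum.cong refl) (simp add: list_weight_snoc pair_weight_def)
  qed
  finally show ?thesis unfolding positive_last_poly_def .
qed

lemma positive_last_poly_1: "positive_last_poly c 1 \<phi> = (\<Sum>z\<in>{1..c}. \<phi> z)"
proof -
  have "positive_seqs c 1 = (\<lambda>(a, z). a @ [z]) ` ({[]} \<times> {1..c})"
    using positive_seqs_Suc[of c 0] by (simp add: positive_seqs_0)
  also have "\<dots> = (\<lambda>z. [z]) ` {1..c}" by (auto intro!: image_eqI[where x = "([], z)" for z])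
  finally have "positive_seqs c 1 = (\<lambda>z. [z]) ` {1..c}" .
  moreover have "inj_on (\<lambda>z::nat. [z]) {1..c}" by (auto simp: inj_on_def)
  ultimately show ?thesis unfolding positive_last_poly_def by (simp add: sum.reindex)
qed

text \<open>Words \<open>w\<^sub>1 \<dots> w\<^sub>j\<close> are functions that are the identity outside \<open>{1..j}\<close>, so that the
  injective words over \<open>{1..j}\<close> are exactly the permutations of \<open>{1..j}\<close>.\<close>

definition injective_words :: "nat \<Rightarrow> nat \<Rightarrow> (nat \<Rightarrow> nat) set" where
  "injective_words j B = {w. (\<forall>i\<in>{1..j}. w i \<in> {1..B}) \<and> inj_on w {1..j}
     \<and> (\<forall>i. i \<notin> {1..j} \<longrightarrow> w i = i)}"

definition injective_last_poly :: "nat \<Rightarrow> nat \<Rightarrow> (nat \<Rightarrow> int poly) \<Rightarrow> int poly" where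
  "injective_last_poly j B \<phi> = (\<Sum>w\<in>injective_words j B. [:0, 1:] ^ des j w * \<phi> (w j))"

definition insert_last :: "nat \<Rightarrow> (nat \<Rightarrow> nat) \<Rightarrow> nat \<Rightarrow> nat \<Rightarrow> nat" where
  "insert_last j w y = (\<lambda>i. if i \<in> {1..j} then (if w i < y then w i else Suc (w i))
     else if i = Suc j then y else i)"

definition remove_last :: "nat \<Rightarrow> (nat \<Rightarrow> nat) \<Rightarrow> nat \<Rightarrow> nat" where
  "remove_last j w = (\<lambda>i. if i \<in> {1..j} then (if w i < w (Suc j) then w i else w i - 1) else i)"

lemma finite_injective_words: "finite (injective_words j B)"
proof (rule finite_subset)
  let ?ext = "\<lambda>g i. if i \<in> {1..j} then g i else i"
  show "injective_words j B \<subseteq> ?ext ` (PiE {1..j} (\<lambda>_. {1..B}))"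
  proof
    fix w assume w: "w \<in> injective_words j B"
    then have "w = ?ext (restrict w {1..j})" by (auto simp: injective_words_def fun_eq_iff)
    moreover have "restrict w {1..j} \<in> PiE {1..j} (\<lambda>_. {1..B})" using w by (auto simp: injective_words_def)
    ultimately show "w \<in> ?ext ` (PiE {1..j} (\<lambda>_. {1..B}))" by blast
  qed
qed (intro finite_imageI finite_PiE; simp)

lemma insert_last_in_injective_words:
  assumes w: "w \<in> injective_words j (B - 1)" and y: "y \<in> {1..B}"
  shows "insert_last j w y \<in> injective_words (Suc j) B"
proof -
  have range: "\<And>i. i \<in> {1..j} \<Longrightarrow> w i \<in> {1..B - 1}" and inj: "inj_on w {1..j}"
    using w by (auto simp: injective_words_def)
  have "inj_on (insert_last j w y) {1..Suc j}"
  proof (rule inj_onI)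
    fix a b assume "a \<in> {1..Suc j}" "b \<in> {1..Suc j}" and eq: "insert_last j w y a = insert_last j w y b"
    then consider "a = Suc j" "b = Suc j" | "a \<in> {1..j}" "b = Suc j" | "a = Suc j" "b \<in> {1..j}"
      | "a \<in> {1..j}" "b \<in> {1..j}" by fastforce
    then show "a = b"
    proof cases
      case 4
      then have "w a = w b" using eq by (auto simp: insert_last_def split: if_splits)
      then show ?thesis using inj 4 by (auto dest: inj_onD)
    qed (use eq in \<open>auto simp: insert_last_def split: if_splits\<close>)
  qed
  moreover have "insert_last j w y i \<in> {1..B}" if "i \<in> {1..Suc j}" for i
    using that range[of i] y by (auto simp: insert_last_def le_Suc_eq)
  ultimately show ?thesis by (auto simp: injective_words_def insert_last_def)
qed

lemma remove_last_in_injective_words: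
  assumes w: "w \<in> injective_words (Suc j) B"
  shows "remove_last j w \<in> injective_words j (B - 1)"
proof -
  have range: "\<And>i. i \<in> {1..Suc j} \<Longrightarrow> w i \<in> {1..B}" and inj: "inj_on w {1..Suc j}"
    using w by (auto simp: injective_words_def)
  have ne: "w i \<noteq> w (Suc j)" if "i \<in> {1..j}" for i
    using that inj by (auto dest: inj_onD)
  have "remove_last j w i \<in> {1..B - 1}" if "i \<in> {1..j}" for i
    using range[of i] range[of "Suc j"] ne[OF that] that by (auto simp: remove_last_def)
  moreover have "inj_on (remove_last j w) {1..j}"
  proof (rule inj_onI)
    fix a b assume a: "a \<in> {1..j}" and b: "b \<in> {1..j}" and "remove_last j w a = remove_last j w b"
    then have "w a = w b"
      using ne[OF a] ne[OF b] range[of a] range[of b] by (auto simp: remove_last_def split: if_splits)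
    then show "a = b" using inj a b by (auto dest: inj_onD)
  qed
  ultimately show ?thesis by (auto simp: injective_words_def remove_last_def)
qed

lemma remove_last_insert_last:
  assumes "w \<in> injective_words j B"
  shows "remove_last j (insert_last j w y) = w"
proof
  fix i
  show "remove_last j (insert_last j w y) i = w i"
    using assms by (auto simp: injective_words_def remove_last_def insert_last_def)
qed

lemma insert_last_remove_last:
  assumes "w \<in> injective_words (Suc j) B"
  shows "insert_last j (remove_last j w) (w (Suc j)) = w"
proof
  fix i
  show "insert_last j (remove_last j w) (w (Suc j)) i = w i"
  proof (cases "i \<in> {1..j}")
    case True
    then have "w i \<noteq> w (Suc j)" "1 \<le> w i"
      using assms by (auto simp: injective_words_def dest: inj_onD)
    then show ?thesis using True by (auto simp: insert_last_def remove_last_def)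
  next
    case False
    then show ?thesis using assms by (auto simp: injective_words_def insert_last_def remove_last_def)
  qed
qed

lemma bij_betw_insert_last:
  "bij_betw (\<lambda>(w, y). insert_last j w y) (injective_words j (B - 1) \<times> {1..B}) (injective_words (Suc j) B)"
proof (rule bij_betw_byWitness[where f' = "\<lambda>w. (remove_last j w, w (Suc j))"])
  have "w (Suc j) \<in> {1..B}" if "w \<in> injective_words (Suc j) B" for w
    using that by (simp add: injective_words_def)
  then show "(\<lambda>w. (remove_last j w, w (Suc j))) ` injective_words (Suc j) B
      \<subseteq> injective_words j (B - 1) \<times> {1..B}"
    using remove_last_in_injective_words by auto
qed (auto simp: remove_last_insert_last insert_last_remove_last insert_last_in_injective_words,
     simp add: insert_last_def)

lemma des_insert_last:
  assumes "w \<in> injective_words j (B - 1)"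
  shows "des (Suc j) (insert_last j w y) = des j w + (if 1 \<le> j \<and> y \<le> w j then 1 else 0)"
proof -
  let ?W = "insert_last j w y"
  have split: "{i \<in> {1..<Suc j}. ?W i > ?W (Suc i)}
      = {i \<in> {1..<j}. w i > w (Suc i)} \<union> {i. i = j \<and> 1 \<le> j \<and> y \<le> w j}"
    by (auto simp: insert_last_def less_Suc_eq)
  have "des (Suc j) ?W
      = card {i \<in> {1..<j}. w i > w (Suc i)} + card {i. i = j \<and> 1 \<le> j \<and> y \<le> w j}"
    unfolding des_def split by (rule card_Un_disjoint) auto
  then show ?thesis by (simp add: des_def)
qed

lemma injective_last_poly_Suc:
  "injective_last_poly (Suc j) B \<phi>
    = injective_last_poly j (B - 1) (\<lambda>v. \<Sum>y\<in>{1..B}. (if 1 \<le> j \<and> y \<le> v then [:0, 1:] else 1) * \<phi> y)"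
proof -
  have "injective_last_poly (Suc j) B \<phi> = (\<Sum>(w, y)\<in>injective_words j (B - 1) \<times> {1..B}.
      [:0, 1:] ^ des (Suc j) (insert_last j w y) * \<phi> (insert_last j w y (Suc j)))"
    unfolding injective_last_poly_def
    by (subst sum.reindex_bij_betw[OF bij_betw_insert_last, symmetric]) (simp add: case_prod_unfold)
  also have "\<dots> = (\<Sum>(w, y)\<in>injective_words j (B - 1) \<times> {1..B}.
      [:0, 1:] ^ des j w * ((if 1 \<le> j \<and> y \<le> w j then [:0, 1:] else 1) * \<phi> y))"
  proof (intro sum.cong refl, clarify)
    fix w y assume "w \<in> injective_words j (B - 1)"
    moreover have "insert_last j w y (Suc j) = y" by (simp add: insert_last_def)
    ultimately show "[:0, 1:] ^ des (Suc j) (insert_last j w y) * \<phi> (insert_last j w y (Suc j))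
        = [:0, 1:] ^ des j w * ((if 1 \<le> j \<and> y \<le> w j then [:0, 1:] else 1) * \<phi> y)"
      by (simp add: des_insert_last power_add)
  qed
  also have "\<dots> = injective_last_poly j (B - 1)
      (\<lambda>v. \<Sum>y\<in>{1..B}. (if 1 \<le> j \<and> y \<le> v then [:0, 1:] else 1) * \<phi> y)"
    by (simp add: injective_last_poly_def sum.cartesian_product sum_distrib_left)
  finally show ?thesis .
qed

lemma injective_last_poly_1: "injective_last_poly 1 B \<phi> = (\<Sum>y\<in>{1..B}. \<phi> y)"
proof -
  have "injective_words 0 (B - 1) = {id}" by (auto simp: injective_words_def fun_eq_iff)
  then show ?thesis using injective_last_poly_Suc[of 0 B \<phi>]
    by (simp add: injective_last_poly_def des_def)
qed

lemma injective_last_poly_cong: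
  assumes "1 \<le> j" "\<And>v. v \<in> {1..B} \<Longrightarrow> f v = g v"
  shows "injective_last_poly j B f = injective_last_poly j B g"
  unfolding injective_last_poly_def
  using assms by (intro sum.cong refl) (auto simp: injective_words_def)

text \<open>Reflecting the last letter, \<open>z \<mapsto> c + j + 1 - z\<close>, turns an ascent into the last letter of a
  positive sequence into a descent into the last letter of an injective word: both sides obey
  the same recursion in the last letter.\<close>

lemma positive_last_poly_eq_injective_last_poly:
  assumes "1 \<le> c" "1 \<le> j"
  shows "positive_last_poly c j \<phi> = injective_last_poly j (c + j - 1) (\<lambda>v. \<phi> (c + j - v))"
  using assms(2)
proof (induction j arbitrary: \<phi> rule: nat_induct_at_least)
  case base
  show ?case
    unfolding positive_last_poly_1 injective_last_poly_1
    using sum.atLeastAtMost_rev[of \<phi> 1 c] by (simp add: add.commute)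
next
  case (Suc j)
  let ?\<psi> = "\<lambda>v. \<Sum>z\<in>{1..c + j}. (if v < z then [:0, 1:] else 1) * \<phi> z"
  have "positive_last_poly c (Suc j) \<phi> = injective_last_poly j (c + j - 1) (\<lambda>v. ?\<psi> (c + j - v))"
    using positive_last_poly_Suc[OF Suc(1)] Suc(2) by simp
  also have "\<dots> = injective_last_poly j (c + j - 1)
      (\<lambda>v. \<Sum>y\<in>{1..c + j}. (if 1 \<le> j \<and> y \<le> v then [:0, 1:] else 1) * \<phi> (c + Suc j - y))"
  proof (rule injective_last_poly_cong[OF Suc(1)])
    fix v assume v: "v \<in> {1..c + j - 1}"
    have "?\<psi> (c + j - v) = (\<Sum>y\<in>{1..c + j}.
        (if c + j - v < c + j + 1 - y then [:0, 1:] else 1) * \<phi> (c + j + 1 - y))"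
      using sum.atLeastAtMost_rev[of "\<lambda>z. (if c + j - v < z then [:0, 1:] else 1) * \<phi> z" 1 "c + j"]
      by (simp add: add.commute)
    also have "\<dots> = (\<Sum>y\<in>{1..c + j}. (if 1 \<le> j \<and> y \<le> v then [:0, 1:] else 1) * \<phi> (c + Suc j - y))"
      using v Suc(1) by (intro sum.cong refl) auto
    finally show "?\<psi> (c + j - v)
        = (\<Sum>y\<in>{1..c + j}. (if 1 \<le> j \<and> y \<le> v then [:0, 1:] else 1) * \<phi> (c + Suc j - y))" .
  qed
  also have "\<dots> = injective_last_poly (Suc j) (c + Suc j - 1) (\<lambda>v. \<phi> (c + Suc j - v))"
    using injective_last_poly_Suc[of j "c + Suc j - 1" "\<lambda>v. \<phi> (c + Suc j - v)"] assms(1) by simp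
  finally show ?case .
qed

lemma positive_poly_eq_sum_des:
  assumes "1 \<le> c" "1 \<le> j"
  shows "positive_poly c j = (\<Sum>w\<in>injective_words j (c + j - 1). [:0, 1:] ^ des j w)"
  using positive_last_poly_eq_injective_last_poly[OF assms, of "\<lambda>_. 1"]
  by (simp add: positive_last_poly_def injective_last_poly_def positive_poly_def)

lemma eulerian_eq_sum_permutes: "eulerian j = (\<Sum>\<sigma> | \<sigma> permutes {1..j}. [:0, 1:] ^ des j \<sigma>)"
proof (cases "j = 0")
  case True
  then have "{\<sigma>. \<sigma> permutes {1..j}} = {id}" by (simp add: permutes_empty)
  then show ?thesis using True by (simp add: eulerian_def des_def)
qed (simp add: eulerian_def)

lemma ex_strict_mono_bij_betw_atLeastAtMost:
  fixes S :: "'a :: wellorder set"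
  assumes "finite S" "card S = j"
  obtains f :: "nat \<Rightarrow> 'a" where "bij_betw f {1..j} S" "strict_mono_on {1..j} f"
proof -
  obtain h where h: "bij_betw h {..<j} S" "strict_mono_on {..<j} h"
    using ex_bij_betw_strict_mono_card[OF assms(1)] assms(2) by blast
  have "bij_betw (\<lambda>i::nat. i - 1) {1..j} {..<j}"
    by (rule bij_betw_byWitness[where f' = Suc]) auto
  then have "bij_betw (\<lambda>i. h (i - 1)) {1..j} S"
    using bij_betw_trans[OF _ h(1)] by (simp add: comp_def)
  moreover have "strict_mono_on {1..j} (\<lambda>i. h (i - 1))"
    by (intro strict_mono_onI) (simp add: strict_mono_onD[OF h(2)])
  ultimately show ?thesis using that by blast
qed

lemma des_comp_strict_mono:
  assumes "\<sigma> ` {1..j} \<subseteq> A" "strict_mono_on A f"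
    and agree: "\<And>i. i \<in> {1..j} \<Longrightarrow> \<tau> i = f (\<sigma> i)"
  shows "des j \<tau> = des j \<sigma>"
proof -
  have "\<tau> i > \<tau> (Suc i) \<longleftrightarrow> \<sigma> i > \<sigma> (Suc i)" if "i \<in> {1..<j}" for i
  proof -
    have "\<sigma> i \<in> A" "\<sigma> (Suc i) \<in> A" using that assms(1) by auto
    then show ?thesis using that agree[of i] agree[of "Suc i"] strict_mono_on_less[OF assms(2)] by auto
  qed
  then show ?thesis unfolding des_def by (metis (lifting) mem_Collect_eq)
qed

lemma injective_words_image_eq_iff:
  assumes "S \<subseteq> {1..B}"
  shows "w \<in> injective_words j B \<and> w ` {1..j} = S
    \<longleftrightarrow> bij_betw w {1..j} S \<and> (\<forall>i. i \<notin> {1..j} \<longrightarrow> w i = i)"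
  using assms by (auto simp: injective_words_def bij_betw_def)

lemma bij_betw_permutes_injective_words_image:
  assumes f: "bij_betw f {1..j} S" and S: "S \<subseteq> {1..B}"
  shows "bij_betw (\<lambda>\<sigma> i. if i \<in> {1..j} then f (\<sigma> i) else i)
    {\<sigma>. \<sigma> permutes {1..j}} {w \<in> injective_words j B. w ` {1..j} = S}"
proof (rule bij_betw_byWitness[where f' = "\<lambda>w i. if i \<in> {1..j} then inv_into {1..j} f (w i) else i"])
  let ?g = "inv_into {1..j} f"
  show "\<forall>\<sigma>\<in>{\<sigma>. \<sigma> permutes {1..j}}.
      (\<lambda>i. if i \<in> {1..j} then ?g (if i \<in> {1..j} then f (\<sigma> i) else i) else i) = \<sigma>"
  proof (intro ballI ext)
    fix \<sigma> i assume "\<sigma> \<in> {\<sigma>. \<sigma> permutes {1..j}}"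
    then have \<sigma>: "\<sigma> permutes {1..j}" by simp
    show "(if i \<in> {1..j} then ?g (if i \<in> {1..j} then f (\<sigma> i) else i) else i) = \<sigma> i"
    proof (cases "i \<in> {1..j}")
      case True
      then have "\<sigma> i \<in> {1..j}" using permutes_in_image[OF \<sigma>] by simp
      with True show ?thesis using inv_into_f_f[OF bij_betw_imp_inj_on[OF f]] by simp
    next
      case False
      then show ?thesis using permutes_not_in[OF \<sigma> False] by auto
    qed
  qed
  show "\<forall>w\<in>{w \<in> injective_words j B. w ` {1..j} = S}.
      (\<lambda>i. if i \<in> {1..j} then f (if i \<in> {1..j} then ?g (w i) else i) else i) = w"
  proof (intro ballI ext)
    fix w i assume w: "w \<in> {w \<in> injective_words j B. w ` {1..j} = S}"
    show "(if i \<in> {1..j} then f (if i \<in> {1..j} then ?g (w i) else i) else i) = w i"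
    proof (cases "i \<in> {1..j}")
      case True
      then have "w i \<in> f ` {1..j}" using w f by (auto simp: bij_betw_def)
      with True show ?thesis by (simp add: f_inv_into_f)
    next
      case False
      then show ?thesis using w by (auto simp: injective_words_def)
    qed
  qed
  show "(\<lambda>\<sigma> i. if i \<in> {1..j} then f (\<sigma> i) else i) ` {\<sigma>. \<sigma> permutes {1..j}}
      \<subseteq> {w \<in> injective_words j B. w ` {1..j} = S}"
  proof clarify
    fix \<sigma> assume "\<sigma> permutes {1..j}"
    then have "bij_betw (f \<circ> \<sigma>) {1..j} S" by (rule bij_betw_trans[OF permutes_imp_bij f])
    then have "bij_betw (\<lambda>i. if i \<in> {1..j} then f (\<sigma> i) else i) {1..j} S"
      by (rule bij_betw_cong[THEN iffD1, rotated]) simp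
    then show "(\<lambda>i. if i \<in> {1..j} then f (\<sigma> i) else i) \<in> injective_words j B \<and>
        (\<lambda>i. if i \<in> {1..j} then f (\<sigma> i) else i) ` {1..j} = S"
      by (subst injective_words_image_eq_iff[OF S]) simp
  qed
  show "(\<lambda>w i. if i \<in> {1..j} then ?g (w i) else i) ` {w \<in> injective_words j B. w ` {1..j} = S}
      \<subseteq> {\<sigma>. \<sigma> permutes {1..j}}"
  proof
    fix \<tau> assume "\<tau> \<in> (\<lambda>w i. if i \<in> {1..j} then ?g (w i) else i)
      ` {w \<in> injective_words j B. w ` {1..j} = S}"
    then obtain w where "w \<in> injective_words j B" "w ` {1..j} = S"
      and \<tau>: "\<tau> = (\<lambda>i. if i \<in> {1..j} then ?g (w i) else i)" by auto
    then have "bij_betw (?g \<circ> w) {1..j} {1..j}"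
      using injective_words_image_eq_iff[OF S] bij_betw_inv_into[OF f] by (blast intro: bij_betw_trans)
    then have "bij_betw (\<lambda>i. if i \<in> {1..j} then ?g (w i) else i) {1..j} {1..j}"
      by (rule bij_betw_cong[THEN iffD1, rotated]) simp
    then have "(\<lambda>i. if i \<in> {1..j} then ?g (w i) else i) permutes {1..j}"
      by (rule bij_imp_permutes) auto
    then show "\<tau> \<in> {\<sigma>. \<sigma> permutes {1..j}}" by (simp add: \<tau>)
  qed
qed

lemma sum_injective_words_image_des:
  assumes "S \<subseteq> {1..B}" "card S = j"
  shows "(\<Sum>w | w \<in> injective_words j B \<and> w ` {1..j} = S. [:0, 1:] ^ des j w) = eulerian j"
proof -
  obtain f :: "nat \<Rightarrow> nat" where f: "bij_betw f {1..j} S" "strict_mono_on {1..j} f"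
    using ex_strict_mono_bij_betw_atLeastAtMost[of S j] assms finite_subset by blast
  let ?\<Phi> = "\<lambda>\<sigma> i. if i \<in> {1..j} then f (\<sigma> i) else i"
  have "(\<Sum>w | w \<in> injective_words j B \<and> w ` {1..j} = S. [:0, 1:] ^ des j w)
      = (\<Sum>\<sigma> | \<sigma> permutes {1..j}. [:0, 1:] ^ des j (?\<Phi> \<sigma>))"
    by (rule sum.reindex_bij_betw[OF bij_betw_permutes_injective_words_image[OF f(1) assms(1)], symmetric])
  also have "\<dots> = (\<Sum>\<sigma> | \<sigma> permutes {1..j}. [:0, 1:] ^ des j \<sigma>)"
  proof (intro sum.cong refl)
    fix \<sigma> assume "\<sigma> \<in> {\<sigma>. \<sigma> permutes {1..j}}"
    then have "\<sigma> ` {1..j} \<subseteq> {1..j}" by (simp add: permutes_image)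
    then show "[:0, 1:] ^ des j (?\<Phi> \<sigma>) = [:0, 1:] ^ des j \<sigma>"
      using des_comp_strict_mono[OF _ f(2), where \<sigma> = \<sigma> and \<tau> = "?\<Phi> \<sigma>"] by simp
  qed
  finally show ?thesis by (simp add: eulerian_eq_sum_permutes)
qed

lemma sum_injective_words_des:
  "(\<Sum>w\<in>injective_words j B. [:0, 1:] ^ des j w) = of_nat (B choose j) * eulerian j"
proof -
  let ?T = "{S. S \<subseteq> {1..B} \<and> card S = j}"
  have "(\<lambda>w. w ` {1..j}) ` injective_words j B \<subseteq> ?T"
    by (auto simp: injective_words_def card_image)
  then have "(\<Sum>w\<in>injective_words j B. [:0, 1:] ^ des j w)
      = (\<Sum>S\<in>?T. \<Sum>w | w \<in> injective_words j B \<and> w ` {1..j} = S. [:0, 1:] ^ des j w)"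
    by (intro sum.group[symmetric] finite_injective_words) auto
  also have "\<dots> = (\<Sum>S\<in>?T. eulerian j)"
    by (intro sum.cong refl) (rule sum_injective_words_image_des; simp)
  finally show ?thesis using n_subsets[of "{1..B}" j] by simp
qed

lemma positive_poly_eq_binomial_eulerian:
  assumes "1 \<le> c"
  shows "positive_poly c j = of_nat (c + j - 1 choose j) * eulerian j"
proof (cases "j = 0")
  case True
  then show ?thesis by (simp add: positive_poly_def positive_seqs_0 eulerian_def)
next
  case False
  then show ?thesis using positive_poly_eq_sum_des[OF assms, of j] sum_injective_words_des by simp
qed

lemma zero_ended_poly_rec_eulerian:
  assumes "1 \<le> c"
  shows "zero_ended_poly c (Suc m) = zero_ended_poly c m
    + [:0, 1:] * (\<Sum>j = 0..m. of_nat (c + m - 1 choose j) * eulerian j * zero_ended_poly c (m - j))"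
proof -
  have "(\<Sum>q\<le>m. zero_ended_poly c q * positive_poly (c + q) (m - q))
      = (\<Sum>q = 0..m. of_nat (c + m - 1 choose (m - q)) * eulerian (m - q) * zero_ended_poly c q)"
    using assms by (intro sum.cong) (auto simp: positive_poly_eq_binomial_eulerian atLeast0AtMost)
  also have "\<dots> = (\<Sum>j = 0..m. of_nat (c + m - 1 choose j) * eulerian j * zero_ended_poly c (m - j))"
    by (subst sum.atLeastAtMost_rev) (auto intro: sum.cong)
  finally show ?thesis by (simp add: zero_ended_poly_rec)
qed

lemma Ekn_eq_zero_ended_poly:
  assumes "q \<le> n"
  shows "Ekn q n = zero_ended_poly (n + 1 - q) q"
proof -
  consider "q = 0" | "q = 1" | "2 \<le> q" by linarith
  then show ?thesis
  proof cases
    case 2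
    have "bounded_seqs c 0 = {[]}" for c by (auto simp: bounded_seqs_def)
    then show ?thesis using 2 by (simp add: Ekn_def zero_ended_poly_Suc pair_weight_def)
  next
    case 3
    define c m where "c = n + 1 - q" and "m = q - 1"
    have "[n - q + 2..<n + 1] = [c + 1..<c + m + 1]"
      unfolding c_def m_def using 3 assms by (intro arg_cong2[where f=upt]) arith+
    then have "Ekn q n = Etilde [c + 1..<c + m + 1]"
      using 3 by (simp add: Ekn_def del: upt_Suc)
    also have "\<dots> = zero_ended_poly c (Suc m)"
      by (simp only: Etilde_consecutive zero_ended_poly_Suc)
    finally show ?thesis using 3 by (simp add: c_def m_def)
  qed (simp add: Ekn_def zero_ended_poly_0)
qed

theorem lemmaB1:
  fixes k n :: nat
  assumes "1 \<le> k" and "k \<le> n"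
  shows "Ekn k n = Ekn (k - 1) (n - 1)
           + [:0, 1:] * (\<Sum>j = 0..k - 1. of_nat (n - 1 choose j) * eulerian j * Ekn (k - 1 - j) (n - 1 - j))"
proof -
  define c m where "c = n + 1 - k" and "m = k - 1"
  have c: "1 \<le> c" "c + m - 1 = n - 1" and k: "k = Suc m"
    using assms by (simp_all add: c_def m_def)
  have E: "Ekn (k - 1 - j) (n - 1 - j) = zero_ended_poly c (m - j)" if "j \<le> m" for j
    using Ekn_eq_zero_ended_poly[of "k - 1 - j" "n - 1 - j"] that assms by (simp add: c_def m_def)
  have "Ekn k n = zero_ended_poly c (Suc m)"
    using Ekn_eq_zero_ended_poly[OF assms(2)] k by (simp add: c_def)
  also have "\<dots> = zero_ended_poly c m
      + [:0, 1:] * (\<Sum>j = 0..m. of_nat (n - 1 choose j) * eulerian j * zero_ended_poly c (m - j))"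
    using zero_ended_poly_rec_eulerian[OF c(1)] c(2) by simp
  also have "zero_ended_poly c m = Ekn (k - 1) (n - 1)"
    using E[of 0] by (simp add: m_def)
  also have "(\<Sum>j = 0..m. of_nat (n - 1 choose j) * eulerian j * zero_ended_poly c (m - j))
      = (\<Sum>j = 0..k - 1. of_nat (n - 1 choose j) * eulerian j * Ekn (k - 1 - j) (n - 1 - j))"
    using E by (simp add: m_def)
  finally show ?thesis .
qed

end
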